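(* Let $k$ be a squarefree positive integer with at most two distinct prime factors. Then every $n\in\mathbb N$ with $\kappa(n)=k$ satisfies $h(\Phi^*_n)=1$; that is, $\{h(\Phi^*_n):\kappa(n)=k\}=\{1\}$.
   Context: $d\mid\mid n$ means $d\mid n$ and $\gcd(d,n/d)=1$; $(j,n)_*=\max\{d: d\mid j,\ d\mid\mid n\}$; $\Phi^*_n(x)=\prod_{1\le j\le n,\ (j,n)_*=1}(x-e^{2\pi i j/n})$ (a polynomial with integer coefficients). $\kappa(n)=\prod_{p\mid n}p$ is the squarefree kernel. The height $h(f)$ of a polynomial $f$ is the maximum absolute value of its coefficients. *)

theory Defs
  imports Complex_Main "HOL-Computational_Algebra.Computational_Algebra"
begin

definition unitary_dvd :: "nat \<Rightarrow> nat \<Rightarrow> bool" where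
  "unitary_dvd d n \<longleftrightarrow> d dvd n \<and> coprime d (n div d)"

definition unitary_gcd :: "nat \<Rightarrow> nat \<Rightarrow> nat" where
  "unitary_gcd j n = Max {d. d dvd j \<and> unitary_dvd d n}"

definition unitary_cyclotomic :: "nat \<Rightarrow> complex poly" where
  "unitary_cyclotomic n =
     (\<Prod>j\<in>{j. 1 \<le> j \<and> j \<le> n \<and> unitary_gcd j n = 1}.
        [:- exp (2 * of_real pi * \<i> * of_nat j / of_nat n), 1:])"

definition kappa :: "nat \<Rightarrow> nat" where
  "kappa n = \<Prod>(prime_factors n)"

definition height :: "complex poly \<Rightarrow> real" where
  "height f = Max {norm (coeff f i) | i. i \<le> degree f}"

end

theory Submission
  imports Defs "HOL-Analysis.Complex_Transcendental"
begin

(*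
  Write n as a product of pairwise coprime prime powers q_1, ..., q_r.  A unitary divisor of n is a
  product of some of the q_i, so (j, n)_* = 1 exactly when no q_i divides j, and Phi*_n is the product
  of x - zeta_n^j over 1 <= j <= n with no q_i dividing j.  The product over the multiples of a
  divisor a of n is x^(n/a) - 1, so Phi*_1 = x - 1, Phi*_q = (x^q - 1)/(x - 1) = 1 + x + ... + x^(q-1),
  and for n = ab with coprime prime powers a, b inclusion-exclusion gives
    Phi*_n (x^a - 1)(x^b - 1) = (x^(ab) - 1)(x - 1).
  Multiplying by the geometric sums of x^a (b terms) and of x^b (a terms) turns this into
    Phi*_n (x^(ab) - 1) = (x - 1) H,   H = sum of x^(ai + bk) over i < b, k < a.
  Coprimality makes these exponents distinct, so H has 0/1 coefficients, and since deg Phi*_n < ab each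
  coefficient of Phi*_n is a difference of two consecutive coefficients of H.
*)

section \<open>Unitary divisors\<close>

lemma unitary_dvd_prime_power:
  assumes "prime p" "n \<noteq> 0"
  shows "unitary_dvd (p ^ multiplicity p n) n"
proof -
  have "\<not> p dvd n div p ^ multiplicity p n"
    using assms multiplicity_decompose[of n p] not_prime_unit[of p] by blast
  then have "coprime p (n div p ^ multiplicity p n)"
    using assms(1) by (simp add: prime_imp_coprime)
  then show ?thesis
    unfolding unitary_dvd_def by (simp add: multiplicity_dvd)
qed

lemma prime_power_dvd_if_unitary_dvd:
  assumes "unitary_dvd d n" "n \<noteq> 0" "prime p" "p dvd d"
  shows "p ^ multiplicity p n dvd d"
proof -
  define e where "e = n div d"
  have n: "n = d * e" and "coprime d e"
    using assms(1) by (auto simp: unitary_dvd_def e_def)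
  then have "\<not> p dvd e"
    using coprime_common_divisor[of d e p] assms(3,4) not_prime_unit by blast
  then have "multiplicity p n = multiplicity p d"
    using n assms(2,3) by (simp add: prime_elem_multiplicity_mult_distrib not_dvd_imp_multiplicity_0)
  then show ?thesis
    by (simp add: multiplicity_dvd)
qed

lemma unitary_gcd_eq_1_iff:
  assumes "n > 0"
  shows "unitary_gcd j n = 1 \<longleftrightarrow> (\<forall>p\<in>prime_factors n. \<not> p ^ multiplicity p n dvd j)"
proof -
  let ?D = "{d. d dvd j \<and> unitary_dvd d n}"
  have "finite ?D"
    by (rule finite_subset[of _ "{d. d dvd n}"]) (use assms in \<open>auto simp: unitary_dvd_def\<close>)
  moreover have "1 \<in> ?D"
    by (simp add: unitary_dvd_def)
  ultimately have "unitary_gcd j n = 1 \<longleftrightarrow> (\<forall>d\<in>?D. d \<le> 1)"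
    unfolding unitary_gcd_def by (metis (no_types, lifting) Max_ge Max_in empty_iff le_antisym)
  also have "\<dots> \<longleftrightarrow> (\<forall>p\<in>prime_factors n. \<not> p ^ multiplicity p n dvd j)"
  proof
    assume small: "\<forall>d\<in>?D. d \<le> 1"
    show "\<forall>p\<in>prime_factors n. \<not> p ^ multiplicity p n dvd j"
    proof (intro ballI notI)
      fix p assume p: "p \<in> prime_factors n" and "p ^ multiplicity p n dvd j"
      then have "p ^ multiplicity p n \<in> ?D"
        using assms unitary_dvd_prime_power[of p n] by auto
      with small have "p ^ multiplicity p n \<le> 1"
        by blast
      moreover have "1 < p ^ multiplicity p n"
        using p assms prime_gt_1_nat[of p]
        by (intro one_less_power) (auto simp: prime_factors_multiplicity)
      ultimately show False
        by simp
    qed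
  next
    assume no_power: "\<forall>p\<in>prime_factors n. \<not> p ^ multiplicity p n dvd j"
    show "\<forall>d\<in>?D. d \<le> 1"
    proof (rule ccontr)
      assume "\<not> (\<forall>d\<in>?D. d \<le> 1)"
      then obtain d where d: "d dvd j" "unitary_dvd d n" "d \<noteq> 1"
        by auto
      then obtain p where p: "prime p" "p dvd d"
        using prime_factor_nat by blast
      with d(2) assms have "p \<in> prime_factors n"
        by (auto simp: unitary_dvd_def in_prime_factors_iff intro: dvd_trans)
      moreover have "p ^ multiplicity p n dvd j"
        using prime_power_dvd_if_unitary_dvd[OF d(2) _ p] assms d(1) by (auto intro: dvd_trans)
      ultimately show False
        using no_power by blast
    qed
  qed
  finally show ?thesis .
qed

lemma prime_factors_kappa: "prime_factors (kappa n) = prime_factors n"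
proof -
  have "prime_factors ` prime_factors n = (\<lambda>p. {p}) ` prime_factors n"
    by (rule image_cong[OF refl]) (meson in_prime_factors_imp_prime prime_prime_factors)
  then show ?thesis
    unfolding kappa_def using prime_factors_prod[of "prime_factors n" "\<lambda>p. p"] by simp
qed

section \<open>Products of linear factors over roots of unity\<close>

lemma prod_linear_factors_dvd:
  fixes p :: "'a::idom poly"
  assumes "finite R" "\<And>r. r \<in> R \<Longrightarrow> poly p r = 0"
  shows "(\<Prod>r\<in>R. [:-r, 1:]) dvd p"
  using assms
proof (induction R rule: finite_induct)
  case empty
  then show ?case by simp
next
  case (insert r R)
  then obtain s where s: "p = (\<Prod>r\<in>R. [:-r, 1:]) * s"
    by (auto elim: dvdE)
  have "poly (\<Prod>r\<in>R. [:-r, 1:]) r \<noteq> 0"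
    using insert.hyps by (simp add: poly_prod)
  moreover have "poly p r = 0"
    using insert.prems by simp
  ultimately have "[:-r, 1:] dvd s"
    using s by (simp add: poly_eq_0_iff_dvd)
  then have "[:-r, 1:] * (\<Prod>r\<in>R. [:-r, 1:]) dvd p"
    unfolding s by (metis mult.commute mult_dvd_mono dvd_refl)
  then show ?case
    using insert.hyps by simp
qed

lemma dvd_imp_eq_if_degree_lead_coeff_eq:
  fixes p q :: "'a::idom poly"
  assumes "p dvd q" "q \<noteq> 0" "degree p = degree q" "lead_coeff p = lead_coeff q"
  shows "p = q"
proof -
  obtain s where q: "q = p * s"
    using assms(1) by (elim dvdE)
  with assms(2) have "p \<noteq> 0" "s \<noteq> 0"
    by auto
  with q assms(3) have "degree s = 0"
    by (simp add: degree_mult_eq)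
  moreover have "lead_coeff s = 1"
    using q assms(4) \<open>p \<noteq> 0\<close> by (simp add: lead_coeff_mult)
  ultimately have "s = 1"
    by (metis degree_0_id one_pCons)
  with q show ?thesis
    by simp
qed

lemma degree_monom_minus_1:
  assumes "n > 0"
  shows "degree (monom 1 n - 1 :: 'a::comm_ring_1 poly) = n"
proof (rule antisym)
  show "degree (monom 1 n - 1 :: 'a poly) \<le> n"
    by (rule degree_diff_le) (auto simp: degree_monom_eq)
  show "n \<le> degree (monom 1 n - 1 :: 'a poly)"
    by (rule le_degree) (use assms in simp)
qed

definition unity_root :: "nat \<Rightarrow> nat \<Rightarrow> complex" where
  "unity_root n j = exp (2 * of_real pi * \<i> * of_nat j / of_nat n)"

lemma inj_on_unity_root:
  assumes "n > 0"
  shows "inj_on (unity_root n) {1..n}"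
proof (rule inj_onI)
  fix j k
  assume "j \<in> {1..n}" "k \<in> {1..n}" "unity_root n j = unity_root n k"
  then have "j mod n = k mod n" "1 \<le> j" "j \<le> n" "1 \<le> k" "k \<le> n"
    using assms by (simp_all add: unity_root_def complex_root_unity_eq)
  then show "j = k"
    by (cases "j = n"; cases "k = n") auto
qed

lemma prod_unity_root_linear:
  assumes "n > 0"
  shows "(\<Prod>j\<in>{1..n}. [:- unity_root n j, 1:]) = monom 1 n - 1"
proof (rule dvd_imp_eq_if_degree_lead_coeff_eq)
  have "(\<Prod>r\<in>unity_root n ` {1..n}. [:-r, 1:]) dvd monom 1 n - 1"
    by (rule prod_linear_factors_dvd)
      (use assms in \<open>auto simp: unity_root_def poly_monom complex_root_unity\<close>)
  then show "(\<Prod>j\<in>{1..n}. [:- unity_root n j, 1:]) dvd monom 1 n - 1"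
    using prod.reindex[OF inj_on_unity_root[OF assms], of "\<lambda>r. [:-r, 1:]"] by simp
  show "degree (\<Prod>j\<in>{1..n}. [:- unity_root n j, 1:]) = degree (monom 1 n - 1 :: complex poly)"
    using assms by (simp add: degree_prod_eq_sum_degree degree_monom_minus_1)
  show "lead_coeff (\<Prod>j\<in>{1..n}. [:- unity_root n j, 1:]) = lead_coeff (monom 1 n - 1 :: complex poly)"
    using assms by (simp add: lead_coeff_prod degree_monom_minus_1)
qed (use assms in \<open>simp add: monom_eq_1_iff\<close>)

lemma prod_unity_root_linear_multiples:
  assumes "a * b = n" "n > 0"
  shows "(\<Prod>j\<in>{j\<in>{1..n}. a dvd j}. [:- unity_root n j, 1:]) = monom 1 b - 1"
proof -
  have "a > 0" "b > 0"
    using assms by auto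
  have multiples: "{j\<in>{1..n}. a dvd j} = (\<lambda>t. a * t) ` {1..b}"
  proof (intro equalityI subsetI)
    fix j
    assume "j \<in> {j\<in>{1..n}. a dvd j}"
    then obtain t where "j = a * t" "1 \<le> a * t" "a * t \<le> a * b"
      using assms(1) by (auto elim: dvdE)
    then show "j \<in> (\<lambda>t. a * t) ` {1..b}"
      using \<open>a > 0\<close> by auto
  qed (use assms \<open>a > 0\<close> in auto)
  have "inj_on (\<lambda>t. a * t) {1..b}"
    using \<open>a > 0\<close> by (simp add: inj_on_def)
  moreover have "unity_root n (a * t) = unity_root b t" for t
    unfolding unity_root_def assms(1)[symmetric] using \<open>a > 0\<close> by (simp add: mult.assoc)
  ultimately show ?thesis
    unfolding multiples using prod_unity_root_linear[OF \<open>b > 0\<close>] by (simp add: prod.reindex)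
qed

section \<open>Coefficients of binary inclusion-exclusion quotients\<close>

lemma coeff_sum_monom_inj:
  assumes "finite S" "inj_on f S"
  shows "coeff (\<Sum>s\<in>S. monom 1 (f s)) t = (if t \<in> f ` S then 1 else 0)"
proof -
  have "coeff (\<Sum>s\<in>S. monom 1 (f s)) t = (\<Sum>s\<in>S. if f s = t then 1 else 0)"
    by (simp add: coeff_sum coeff_monom)
  also have "\<dots> = (\<Sum>u\<in>f ` S. if u = t then 1 else 0)"
    using assms(2) by (simp add: sum.reindex)
  also have "\<dots> = (if t \<in> f ` S then 1 else 0)"
    using assms(1) by (simp add: sum.delta')
  finally show ?thesis .
qed

lemma monom_minus_1_mult_geometric:
  "(monom 1 a - 1) * (\<Sum>i<b. monom 1 (a * i)) = (monom 1 (a * b) - 1 :: 'a::comm_ring_1 poly)"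
  using power_diff_1_eq[of "monom 1 a" b, symmetric] by (simp add: monom_power)

lemma inj_on_linear_combination:
  fixes a b :: nat
  assumes "coprime a b"
  shows "inj_on (\<lambda>(i, k). a * i + b * k) ({..<b} \<times> {..<a})"
proof (rule inj_onI, clarify)
  fix i k i' k' :: nat
  assume ranges: "i < b" "i' < b" and eq: "a * i + b * k = a * i' + b * k'"
  have "int a * (int i - int i') = int b * (int k' - int k)"
    using arg_cong[OF eq, of int] by (simp add: algebra_simps)
  then have "int b dvd (int i - int i') * int a"
    by (simp add: mult.commute)
  then have "int b dvd int i - int i'"
    using assms by (simp add: coprime_dvd_mult_left_iff coprime_commute)
  moreover have "\<bar>int i - int i'\<bar> < int b"
    using ranges by linarith
  ultimately have "i = i'"
    using dvd_imp_le_int[of "int i - int i'" "int b"] by fastforce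
  with eq ranges show "i = i' \<and> k = k'"
    by simp
qed

lemma coeff_mem_if_mult_monom_minus_1:
  fixes U H :: "'a::comm_ring_1 poly"
  assumes "degree U < N" "U * (monom 1 N - 1) = (monom 1 1 - 1) * H"
    and "\<And>i. coeff H i \<in> {0, 1}"
  shows "coeff U m \<in> {-1, 0, 1}"
proof (cases "m < N")
  case True
  have "- coeff U m = coeff (U * (monom 1 N - 1)) m"
    using True by (simp add: right_diff_distrib mult.commute[of U] coeff_monom_mult)
  also have "\<dots> = (if m = 0 then 0 else coeff H (m - 1)) - coeff H m"
    unfolding assms(2) by (simp add: left_diff_distrib coeff_monom_mult)
  finally have "coeff U m = coeff H m - (if m = 0 then 0 else coeff H (m - 1))"
    by (simp add: algebra_simps)
  then show ?thesis
    using assms(3)[of m] assms(3)[of "m - 1"] by auto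
next
  case False
  then show ?thesis
    using assms(1) by (simp add: coeff_eq_0)
qed

lemma coeff_mem_binary_inclusion_exclusion:
  fixes U :: "'a::idom poly" and a b :: nat
  assumes "coprime a b" "a > 0" "b > 0"
    and eq: "U * (monom 1 a - 1) * (monom 1 b - 1) = (monom 1 (a * b) - 1) * (monom 1 1 - 1)"
  shows "coeff U m \<in> {-1, 0, 1}"
proof -
  let ?X = "\<lambda>n. monom (1::'a) n - 1"
  let ?G = "\<Sum>i<b. monom (1::'a) (a * i)"
  let ?S = "\<Sum>k<a. monom (1::'a) (b * k)"
  define f where "f = (\<lambda>(i, k). a * i + b * k)"
  define H where "H = (\<Sum>s\<in>{..<b} \<times> {..<a}. monom (1::'a) (f s))"
  have "degree U < a * b"
  proof -
    have "U \<noteq> 0"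
      using eq assms(2,3) by (auto simp: monom_eq_1_iff)
    then have "degree U + a + b = a * b + 1"
      using arg_cong[OF eq, of degree] assms(2,3)
      by (simp add: degree_mult_eq monom_eq_1_iff degree_monom_minus_1)
    then show ?thesis
      using assms(2,3) by linarith
  qed
  moreover have "U * ?X (a * b) = ?X 1 * H"
  proof -
    have G: "?X a * ?G = ?X (a * b)"
      by (rule monom_minus_1_mult_geometric)
    have S: "?X b * ?S = ?X (a * b)"
      using monom_minus_1_mult_geometric[of b a] by (simp add: mult.commute[of b a])
    have GS: "?G * ?S = H"
      by (simp add: H_def f_def sum_product sum.cartesian_product mult_monom case_prod_beta)
    have "?X (a * b) * (U * ?X (a * b)) = U * (?X a * ?G) * (?X b * ?S)"
      unfolding G S by (simp only: ac_simps)
    also have "\<dots> = (U * ?X a * ?X b) * (?G * ?S)"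
      by (simp only: ac_simps)
    also have "\<dots> = ?X (a * b) * (?X 1 * H)"
      unfolding eq GS by (simp only: ac_simps)
    finally show ?thesis
      using assms(2,3) by (simp add: monom_eq_1_iff)
  qed
  moreover have "coeff H i \<in> {0, 1}" for i
  proof -
    have "inj_on f ({..<b} \<times> {..<a})"
      using inj_on_linear_combination[OF assms(1)] by (simp add: f_def)
    then show ?thesis
      unfolding H_def by (simp add: coeff_sum_monom_inj)
  qed
  ultimately show ?thesis
    by (rule coeff_mem_if_mult_monom_minus_1)
qed

lemma height_eq_1I:
  assumes "lead_coeff f = 1" "\<And>i. coeff f i \<in> {-1, 0, 1}"
  shows "height f = 1"
  unfolding height_def
proof (rule Max_eqI)
  show "finite {norm (coeff f i) |i. i \<le> degree f}"
    by simp
  show "y \<le> 1" if y: "y \<in> {norm (coeff f i) |i. i \<le> degree f}" for y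
  proof -
    obtain i where "y = norm (coeff f i)"
      using y by blast
    with assms(2)[of i] show ?thesis
      by auto
  qed
  show "1 \<in> {norm (coeff f i) |i. i \<le> degree f}"
    using assms(1) by force
qed

section \<open>Unitary cyclotomic polynomials of at most two prime factors\<close>

lemma prod_filter_split:
  assumes "finite J"
  shows "prod g J = prod g {j\<in>J. P j} * prod g {j\<in>J. \<not> P j}"
proof -
  have "prod g J = prod g (J \<inter> {j. P j}) * prod g (J - {j. P j})"
    using assms by (rule prod.Int_Diff)
  also have "J \<inter> {j. P j} = {j\<in>J. P j}"
    by auto
  also have "J - {j. P j} = {j\<in>J. \<not> P j}"
    by auto
  finally show ?thesis .
qed

lemma prod_inclusion_exclusion2:
  fixes g :: "'a \<Rightarrow> 'b::comm_monoid_mult"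
  assumes "finite J"
  shows "prod g J * prod g {j\<in>J. P j \<and> Q j} =
    prod g {j\<in>J. \<not> P j \<and> \<not> Q j} * prod g {j\<in>J. P j} * prod g {j\<in>J. Q j}"
proof -
  let ?N = "{j\<in>J. \<not> P j \<and> \<not> Q j}" and ?P = "{j\<in>J. P j}" and ?Q = "{j\<in>J. Q j}"
  have "?N \<union> (?P \<union> ?Q) = J"
    by auto
  then have whole: "prod g J = prod g ?N * prod g (?P \<union> ?Q)"
    using prod.union_disjoint[of ?N "?P \<union> ?Q" g] assms by auto
  have "prod g (?P \<union> ?Q) * prod g (?P \<inter> ?Q) = prod g ?P * prod g ?Q"
    using assms by (intro prod.union_inter) simp_all
  moreover have "?P \<inter> ?Q = {j\<in>J. P j \<and> Q j}"
    by auto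
  ultimately have "prod g (?P \<union> ?Q) * prod g {j\<in>J. P j \<and> Q j} = prod g ?P * prod g ?Q"
    by simp
  then show ?thesis
    unfolding whole by (simp only: mult.assoc)
qed

lemma unitary_cyclotomic_eq_prod:
  assumes "n > 0"
  shows "unitary_cyclotomic n =
    (\<Prod>j\<in>{j\<in>{1..n}. \<forall>p\<in>prime_factors n. \<not> p ^ multiplicity p n dvd j}.
       [:- unity_root n j, 1:])"
  unfolding unitary_cyclotomic_def unity_root_def using unitary_gcd_eq_1_iff[OF assms] by simp

lemma lead_coeff_unitary_cyclotomic: "lead_coeff (unitary_cyclotomic n) = 1"
  unfolding unitary_cyclotomic_def by (simp add: lead_coeff_prod)

lemma coeff_unitary_cyclotomic_one: "coeff (unitary_cyclotomic 1) i \<in> {-1, 0, 1}"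
proof -
  have "unitary_cyclotomic 1 = monom 1 1 - 1"
    using unitary_cyclotomic_eq_prod[of 1] prod_unity_root_linear[of 1] by simp
  then show ?thesis
    by (simp add: coeff_monom)
qed

lemma coeff_unitary_cyclotomic_prime_power:
  assumes "n > 0" "prime_factors n = {p}"
  shows "coeff (unitary_cyclotomic n) i \<in> {-1, 0, 1}"
proof -
  let ?f = "\<lambda>j. [:- unity_root n j, 1:]"
  have "n = p ^ multiplicity p n"
    using prime_factorization_nat[OF assms(1)] assms(2) by simp
  then have U: "unitary_cyclotomic n = prod ?f {j\<in>{1..n}. \<not> n dvd j}"
    using unitary_cyclotomic_eq_prod[OF assms(1)] assms(2) by simp
  have nonzero: "monom 1 1 - 1 \<noteq> (0 :: complex poly)"
    using degree_monom_minus_1[of 1, where 'a = complex] by auto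
  have "prod ?f {j\<in>{1..n}. n dvd j} * prod ?f {j\<in>{1..n}. \<not> n dvd j} = monom 1 n - 1"
    using prod_unity_root_linear[OF assms(1)] prod_filter_split[of "{1..n}" ?f] by simp
  then have "(monom 1 1 - 1) * unitary_cyclotomic n = monom 1 n - 1"
    using prod_unity_root_linear_multiples[of n 1 n] assms(1) U by simp
  also have "\<dots> = (monom 1 1 - 1) * (\<Sum>i<n. monom 1 i)"
    using monom_minus_1_mult_geometric[of 1 n, symmetric] by simp
  finally have "unitary_cyclotomic n = (\<Sum>i<n. monom 1 i)"
    by (simp only: mult_left_cancel[OF nonzero])
  then show ?thesis
    by (simp add: coeff_sum coeff_monom)
qed

lemma coeff_unitary_cyclotomic_two_primes:
  assumes "n > 0" "prime_factors n = {p, q}" "p \<noteq> q"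
  shows "coeff (unitary_cyclotomic n) i \<in> {-1, 0, 1}"
proof -
  let ?f = "\<lambda>j. [:- unity_root n j, 1:]"
  define a where "a = p ^ multiplicity p n"
  define b where "b = q ^ multiplicity q n"
  have "prime p" "prime q"
    using assms(2) by auto
  have n: "n = a * b"
    using prime_factorization_nat[OF assms(1)] assms(2,3) by (simp add: a_def b_def)
  then have "a > 0" "b > 0"
    using assms(1) by auto
  have "coprime a b"
    unfolding a_def b_def using \<open>prime p\<close> \<open>prime q\<close> assms(3) by (simp add: primes_coprime)
  have U: "unitary_cyclotomic n = prod ?f {j\<in>{1..n}. \<not> a dvd j \<and> \<not> b dvd j}"
    using unitary_cyclotomic_eq_prod[OF assms(1)] assms(2) by (simp add: a_def b_def)
  have "{j\<in>{1..n}. a dvd j \<and> b dvd j} = {j\<in>{1..n}. n dvd j}"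
    using \<open>coprime a b\<close> n by (auto intro: divides_mult dvd_mult_left dvd_mult_right)
  then have "prod ?f {1..n} * prod ?f {j\<in>{1..n}. n dvd j} =
      unitary_cyclotomic n * prod ?f {j\<in>{1..n}. a dvd j} * prod ?f {j\<in>{1..n}. b dvd j}"
    using prod_inclusion_exclusion2[of "{1..n}" ?f "\<lambda>j. a dvd j" "\<lambda>j. b dvd j"] U by simp
  then have "(monom 1 n - 1) * (monom 1 1 - 1) =
      unitary_cyclotomic n * (monom 1 b - 1) * (monom 1 a - 1)"
    using prod_unity_root_linear[OF assms(1)] prod_unity_root_linear_multiples[of n 1 n]
      prod_unity_root_linear_multiples[of a b n] prod_unity_root_linear_multiples[of b a n]
      n assms(1)
    by (simp add: mult.commute)
  then have "unitary_cyclotomic n * (monom 1 a - 1) * (monom 1 b - 1) =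
      (monom 1 (a * b) - 1) * (monom 1 1 - 1)"
    by (simp add: n ac_simps)
  with \<open>coprime a b\<close> \<open>a > 0\<close> \<open>b > 0\<close> show ?thesis
    by (rule coeff_mem_binary_inclusion_exclusion)
qed

lemma coeff_unitary_cyclotomic_mem:
  assumes "n > 0" "card (prime_factors n) \<le> 2"
  shows "coeff (unitary_cyclotomic n) i \<in> {-1, 0, 1}"
proof -
  consider "prime_factors n = {}" | p where "prime_factors n = {p}"
    | p q where "prime_factors n = {p, q}" "p \<noteq> q"
    using assms(2) by (auto simp: le_Suc_eq card_Suc_eq card_2_iff numeral_2_eq_2)
  then show ?thesis
  proof cases
    case 1
    then have "n = 1"
      using prime_factorization_nat[OF assms(1)] by simp
    then show ?thesis
      using coeff_unitary_cyclotomic_one by simp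
  next
    case 2
    then show ?thesis
      using assms(1) by (intro coeff_unitary_cyclotomic_prime_power)
  next
    case 3
    then show ?thesis
      using assms(1) by (intro coeff_unitary_cyclotomic_two_primes)
  qed
qed

theorem lemma5p4:
  fixes k n :: nat
  assumes "k > 0" and "squarefree k" and "card (prime_factors k) \<le> 2"
    and "n > 0" and "kappa n = k"
  shows "height (unitary_cyclotomic n) = 1"
proof (rule height_eq_1I)
  show "lead_coeff (unitary_cyclotomic n) = 1"
    by (rule lead_coeff_unitary_cyclotomic)
  \<comment> \<open>The hypotheses \<open>k > 0\<close> and \<open>squarefree k\<close> hold automatically for \<open>k = kappa n\<close>.\<close>
  have "card (prime_factors n) \<le> 2"
    using assms(3,5) prime_factors_kappa[of n] by simp
  with assms(4) show "coeff (unitary_cyclotomic n) i \<in> {-1, 0, 1}" for i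
    by (rule coeff_unitary_cyclotomic_mem)
qed

end
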